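(* Let $A\in\mathbb{R}^{n\times n}$, $B\in\mathbb{R}^{n\times m}$, $C\in\mathbb{R}^{p\times n}$, $\bar T>0$. Let $\hat A, \hat B, \hat C$ be reduced matrices computed by the time-limited IRKA-type algorithm, in the following sense: $\hat A=S^{-1}DS$ with $D=\operatorname{diag}(\lambda_1,\dots,\lambda_r)$, $\tilde B=S\hat B$, $\tilde C=\hat CS^{-1}$, and there are $V,W\in\mathbb{C}^{n\times r}$ with $W^TV$ invertible such that $$-VD-AV=B\tilde B^T-e^{A\bar T}B\tilde B^Te^{D\bar T},\qquad -WD-A^TW=C^T\tilde C-e^{A^T\bar T}C^T\tilde Ce^{D\bar T},$$ $$\hat A=(W^TV)^{-1}W^TAV,\qquad \hat B=(W^TV)^{-1}W^TB,\qquad \hat C=CV.$$ Assume all matrix inverses below exist. Set $\operatorname{Pr}:=V(W^TV)^{-1}W^T$. Then: (a) $L_c-R_c=E_c$, where $L_c:=(I\otimes \hat C) \left[(I\otimes \hat A)+(D\otimes I)\right]^{-1}(e^{D \bar T}\tilde B \otimes e^{\hat A \bar T}\hat B -\tilde B \otimes \hat B) \operatorname{vec}(I)$, $R_c:=(I\otimes C) \left[(I\otimes A)+(D\otimes I)\right]^{-1} (e^{D \bar T}\tilde B \otimes e^{ A \bar T} B -\tilde B \otimes B) \operatorname{vec}(I)$ and $$E_c = (I\otimes \hat C) \left[(I\otimes \hat A)+(D\otimes I)\right]^{-1}\big(e^{D \bar T}\tilde B \otimes (W^TV)^{-1}W^T(e^{A \operatorname{Pr}\bar T}-e^{A \bar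 T}) B \big) \operatorname{vec}(I).$$ (b) $L_b-R_b=E_b$, where $L_b:=(\hat B^T\otimes I) \left[(I\otimes D)+(\hat A^T\otimes I)\right]^{-1}(e^{\hat A^T \bar T}\hat C^T \otimes e^{D \bar T}\tilde C^T-\hat C^T \otimes \tilde C^T)\operatorname{vec}(I)$, $R_b:=(B^T\otimes I) \left[(I\otimes D)+(A^T\otimes I)\right]^{-1}(e^{A^T \bar T} C^T \otimes e^{D \bar T}\tilde C^T-C^T \otimes \tilde C^T)\operatorname{vec}(I)$ and $$E_b = (\hat B^T\otimes I) \left[(I\otimes D)+(\hat A^T\otimes I)\right]^{-1}\big(V^T(e^{ A^T \operatorname{Pr}^T \bar T}-e^{ A^T \bar T})C^T \otimes e^{D \bar T}\tilde C^T\big)\operatorname{vec}(I).$$ (c) For all $i=1,\ldots,r$, $L_\lambda^i-R_\lambda^i=E_{\lambda,1}^i+E_{\lambda,2}^i$, where $$L_\lambda^i:=\operatorname{vec}^T(I) (\hat C \otimes \tilde C) \hat K_2^{-1} (I\otimes e_i e_i^T)\Big( \hat K_2^{-1} (e^{\hat A \bar T}\hat B \otimes e^{D \bar T}\tilde B -\hat B \otimes \tilde B)- (\bar Te^{\hat A \bar T}\hat B \otimes e^{D \bar T}\tilde B) \Big)\operatorname{vec}(I),$$ $$R_\lambda^i:=\operatorname{vec}^T(I) ( C \otimes \tilde C) K_2^{-1} (I\otimes e_i e_i^T)\Big( K_2^{-1} (e^{A \bar T} B \otimes e^{D \bar T}\tilde B -B \otimes \tilde B)-(\bar Te^{A \bar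 T}B \otimes e^{D \bar T}\tilde B)\Big) \operatorname{vec}(I),$$ $$E_{\lambda, 1}^i=\operatorname{vec}^T(I) (\hat C \otimes \tilde C) \hat K_2^{-1} (I\otimes e_i e_i^T)\Big( \hat K_2^{-1} \big((W^TV)^{-1} W^T(e^{A \operatorname{Pr} \bar T}-e^{A \bar T}) B \otimes e^{D \bar T}\tilde B\big)-\big(\bar T(W^TV)^{-1} W^T(e^{A \operatorname{Pr}\bar T}-e^{A \bar T}) B \otimes e^{D \bar T}\tilde B\big)\Big) \operatorname{vec}(I),$$ $$E_{\lambda, 2}^i=\operatorname{vec}^T(I) (C e^{A \bar T} \otimes \tilde C e^{D \bar T})\left[(V\otimes I) \hat K_2^{-1} ((W^T V)^{-1}W^T \otimes I)- K_2^{-1}\right](I\otimes e_i e_i^T)\left[K_2^{-1} (e^{A \bar T} B \otimes e^{D \bar T}\tilde B - B \otimes \tilde B)-(\bar Te^{A \bar T} B \otimes e^{D \bar T}\tilde B)\right]\operatorname{vec}(I),$$ with $\hat K_2:=(I\otimes D)+(\hat A\otimes I)$ and $K_2:=(I\otimes D)+(A\otimes I)$.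
   Context: $e_i$ is the $i$-th column of an identity matrix, $I$ denotes identity matrices of suitable sizes, $\otimes$ is the Kronecker product, $\operatorname{vec}$ stacks the columns of a matrix into a vector and $\operatorname{vec}^T(I)=(\operatorname{vec}(I))^T$; transposes are plain transposes. The time-limited IRKA-type algorithm iterates: given $\hat A,\hat B,\hat C$, diagonalize $D=S\hat AS^{-1}$, set $\tilde B=S\hat B$, $\tilde C=\hat CS^{-1}$, solve the two Sylvester equations displayed in the claim for $V$ and $W$, orthogonalize $V,W$, and set $\hat A=(W^TV)^{-1}W^TAV$, $\hat B=(W^TV)^{-1}W^TB$, $\hat C=CV$. The quantities $L_c,R_c$, $L_b,R_b$, $L_\lambda^i,R_\lambda^i$ are the two sides of the Kronecker-form first-order necessary optimality conditions for the time-limited $\mathcal H_2$ model reduction problem. *)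

theory Defs
  imports Complex_Main "Jordan_Normal_Form.Matrix" "Jordan_Normal_Form.Gauss_Jordan_Elimination"
begin

definition kron :: "'a::times mat \<Rightarrow> 'a mat \<Rightarrow> 'a mat" where
  "kron X Y = mat (dim_row X * dim_row Y) (dim_col X * dim_col Y)
     (\<lambda>(i,j). X $$ (i div dim_row Y, j div dim_col Y) * Y $$ (i mod dim_row Y, j mod dim_col Y))"

(* vec: stacks the columns of a matrix into a column vector (as a (rows*cols) x 1 matrix) *)
definition vecm :: "'a mat \<Rightarrow> 'a mat" where
  "vecm X = mat (dim_row X * dim_col X) 1 (\<lambda>(k,_). X $$ (k mod dim_row X, k div dim_row X))"

definition minv :: "'a::field mat \<Rightarrow> 'a mat" where
  "minv X = the (mat_inverse X)"

definition mexp :: "complex mat \<Rightarrow> complex mat" where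
  "mexp X = mat (dim_row X) (dim_row X) (\<lambda>(i,j). \<Sum>k. (X ^\<^sub>m k) $$ (i,j) / of_nat (fact k))"

(* i-th column of the r x r identity, as an r x 1 matrix (0-based index) *)
definition unitcol :: "nat \<Rightarrow> nat \<Rightarrow> complex mat" where
  "unitcol r i = mat r 1 (\<lambda>(k,_). if k = i then 1 else 0)"

definition diagm :: "nat \<Rightarrow> (nat \<Rightarrow> complex) \<Rightarrow> complex mat" where
  "diagm r lam = mat r r (\<lambda>(i,j). if i = j then lam i else 0)"

abbreviation cmat :: "real mat \<Rightarrow> complex mat" where
  "cmat X \<equiv> map_mat complex_of_real X"

end

theory Submission
  imports Defs
begin

(* Write P = (W^T V)^-1 W^T, so that P V = I, Pr = V P, and Ahat = P A V, Bhat = P B, Chat = C V.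
   Since Ahat P = P (A Pr), the exponentials intertwine: e^(Ahat T) P = P e^(A Pr T), hence
   e^(Ahat T) Bhat = P e^(A T) B + Berr with the error factor Berr = P (e^(A Pr T) - e^(A T)) B.
   Multiplying the Sylvester equation for V by P therefore gives a reduced Sylvester equation that
   is solved by the identity, perturbed by Berr. Through (X (x) Y) vec M = vec (Y M X^T) the
   Kronecker inverses in L and R just solve these Sylvester equations (with solutions I and V), so
   both sides of (a) reduce to vec Chat up to the error term; (b) is the same argument for W, with
   solutions W^T V and W^T. In (c) the inverses act twice. The second error term appears because,
   by the Sylvester equation for W, replacing the weight C (x) Ct by C e^(A T) (x) Ct e^(D T) adds
   the row vec(W^T)^T K2, and this row annihilates (V (x) I) K2hat^-1 (P (x) I) - K2^-1. *)

section \<open>Kronecker products and vectorisation\<close>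

lemma sum_lessThan_mult_div_mod:
  fixes b d :: nat
  shows "(\<Sum>l<b*d. f (l div d) (l mod d)) = (\<Sum>j<b. \<Sum>q<d. f j q)"
proof (induction b)
  case 0 then show ?case by simp
next
  case (Suc b)
  have "{..<Suc b * d} = {..<b*d} \<union> {b*d..<b*d+d}" by auto
  then have "(\<Sum>l<Suc b*d. f (l div d) (l mod d))
      = (\<Sum>l<b*d. f (l div d) (l mod d)) + (\<Sum>l\<in>{b*d..<b*d+d}. f (l div d) (l mod d))"
    by (metis (no_types, lifting) ivl_disj_int_one(2) finite_atLeastLessThan finite_lessThan
        lessThan_atLeast0 sum.union_disjoint)
  also have "(\<Sum>l\<in>{b*d..<b*d+d}. f (l div d) (l mod d)) = (\<Sum>q<d. f b q)"
  proof -
    have "(\<Sum>l\<in>{b*d..<b*d+d}. f (l div d) (l mod d)) = (\<Sum>q<d. f ((q + b*d) div d) ((q+b*d) mod d))"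
      by (rule sum.reindex_bij_witness[of _ "\<lambda>q. q + b*d" "\<lambda>l. l - b*d"]) auto
    also have "\<dots> = (\<Sum>q<d. f b q)" by (rule sum.cong) auto
    finally show ?thesis .
  qed
  finally show ?case using Suc by simp
qed

lemma index_mult_mat_sum:
  "A \<in> carrier_mat a b \<Longrightarrow> B \<in> carrier_mat b c \<Longrightarrow> i < a \<Longrightarrow> j < c \<Longrightarrow>
   (A * B) $$ (i,j) = (\<Sum>k<b. A $$ (i,k) * B $$ (k,j))"
  by (auto simp: scalar_prod_def lessThan_atLeast0 intro!: sum.cong)

lemma kron_carrier_mat:
  "X \<in> carrier_mat a b \<Longrightarrow> Y \<in> carrier_mat c d \<Longrightarrow> kron X Y \<in> carrier_mat (a*c) (b*d)"
  by (auto simp: kron_def)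

lemma kron_dims [simp]:
  "dim_row (kron X Y) = dim_row X * dim_row Y" "dim_col (kron X Y) = dim_col X * dim_col Y"
  by (auto simp: kron_def)

lemma index_kron:
  "X \<in> carrier_mat a b \<Longrightarrow> Y \<in> carrier_mat c d \<Longrightarrow> i < a*c \<Longrightarrow> j < b*d \<Longrightarrow>
   kron X Y $$ (i,j) = X $$ (i div c, j div d) * Y $$ (i mod c, j mod d)"
  by (auto simp: kron_def)

lemma div_less_of_less_mult: "(i::nat) < a*c \<Longrightarrow> i div c < a"
  by (simp add: less_mult_imp_div_less)

lemma mod_less_of_less_mult: "(i::nat) < a*c \<Longrightarrow> i mod c < c"
  by (metis mod_less_divisor mult_0_right neq0_conv not_less0)

lemma div_less_of_less_mult': "(i::nat) < c*a \<Longrightarrow> i div c < a"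
  by (simp add: less_mult_imp_div_less mult.commute)

lemma mod_less_of_less_mult': "(i::nat) < c*a \<Longrightarrow> i mod c < c"
  by (metis mod_less_of_less_mult mult.commute)

lemma mult_kron_kron:
  fixes X :: "'a::comm_ring_1 mat"
  assumes X: "X \<in> carrier_mat a b" and Y: "Y \<in> carrier_mat c d"
    and X': "X' \<in> carrier_mat b e" and Y': "Y' \<in> carrier_mat d f"
  shows "kron X Y * kron X' Y' = kron (X*X') (Y*Y')"
proof (rule eq_matI)
  have K1: "kron X Y \<in> carrier_mat (a*c) (b*d)" using X Y by (rule kron_carrier_mat)
  have K2: "kron X' Y' \<in> carrier_mat (b*d) (e*f)" using X' Y' by (rule kron_carrier_mat)
  have K3: "kron (X*X') (Y*Y') \<in> carrier_mat (a*c) (e*f)" using X Y X' Y' by (intro kron_carrier_mat) auto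
  show "dim_row (kron X Y * kron X' Y') = dim_row (kron (X * X') (Y * Y'))" using K1 K3 by simp
  show "dim_col (kron X Y * kron X' Y') = dim_col (kron (X * X') (Y * Y'))" using K2 K3 by simp
  fix i j assume "i < dim_row (kron (X * X') (Y * Y'))" "j < dim_col (kron (X * X') (Y * Y'))"
  then have i: "i < a*c" and j: "j < e*f" using K3 by auto
  have "(kron X Y * kron X' Y') $$ (i,j) = (\<Sum>l<b*d. kron X Y $$ (i,l) * kron X' Y' $$ (l,j))"
    by (rule index_mult_mat_sum[OF K1 K2 i j])
  also have "\<dots> = (\<Sum>l<b*d. (\<lambda>u v. X $$ (i div c, u) * Y $$ (i mod c, v)
      * (X' $$ (u, j div f) * Y' $$ (v, j mod f))) (l div d) (l mod d))"
    apply (rule sum.cong, simp)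
    using X Y X' Y' i j by (simp add: index_kron div_less_of_less_mult mod_less_of_less_mult ac_simps)
  also have "\<dots> = (\<Sum>u<b. \<Sum>v<d. X $$ (i div c, u) * Y $$ (i mod c, v)
      * (X' $$ (u, j div f) * Y' $$ (v, j mod f)))"
    by (rule sum_lessThan_mult_div_mod)
  also have "\<dots> = (\<Sum>u<b. X $$ (i div c, u) * X' $$ (u, j div f))
      * (\<Sum>v<d. Y $$ (i mod c, v) * Y' $$ (v, j mod f))"
    unfolding sum_product by (intro sum.cong refl) (simp add: ac_simps)
  also have "\<dots> = (X*X') $$ (i div c, j div f) * (Y*Y') $$ (i mod c, j mod f)"
    by (simp only: index_mult_mat_sum[OF X X' div_less_of_less_mult[OF i] div_less_of_less_mult[OF j]]
        index_mult_mat_sum[OF Y Y' mod_less_of_less_mult[OF i] mod_less_of_less_mult[OF j]])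
  also have "\<dots> = kron (X*X') (Y*Y') $$ (i,j)"
    using X Y X' Y' i j by (subst index_kron) auto
  finally show "(kron X Y * kron X' Y') $$ (i,j) = kron (X*X') (Y*Y') $$ (i,j)" .
qed

lemma vecm_carrier_mat: "M \<in> carrier_mat a b \<Longrightarrow> vecm M \<in> carrier_mat (a*b) 1"
  by (auto simp: vecm_def)

lemma index_vecm:
  "M \<in> carrier_mat a b \<Longrightarrow> k < a*b \<Longrightarrow> vecm M $$ (k,0) = M $$ (k mod a, k div a)"
  by (auto simp: vecm_def)

lemma vecm_dims [simp]: "dim_row (vecm X) = dim_row X * dim_col X" "dim_col (vecm X) = 1"
  by (auto simp: vecm_def)

lemma kron_mult_vecm:
  fixes X :: "'a::comm_ring_1 mat"
  assumes X: "X \<in> carrier_mat a b" and Y: "Y \<in> carrier_mat c d" and M: "M \<in> carrier_mat d b"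
  shows "kron X Y * vecm M = vecm (Y * M * transpose_mat X)"
proof (rule eq_matI)
  have K1: "kron X Y \<in> carrier_mat (a*c) (b*d)" using X Y by (rule kron_carrier_mat)
  have V1: "vecm M \<in> carrier_mat (b*d) 1" using vecm_carrier_mat[OF M] by (simp add: mult.commute)
  have YMX: "Y * M * transpose_mat X \<in> carrier_mat c a" using X Y M by auto
  have V2: "vecm (Y * M * transpose_mat X) \<in> carrier_mat (a*c) 1"
    using vecm_carrier_mat[OF YMX] by (simp add: mult.commute)
  show "dim_row (kron X Y * vecm M) = dim_row (vecm (Y * M * transpose_mat X))" using K1 V2 by simp
  show "dim_col (kron X Y * vecm M) = dim_col (vecm (Y * M * transpose_mat X))" using V1 V2 by simp
  fix i j
  assume "i < dim_row (vecm (Y * M * transpose_mat X))" "j < dim_col (vecm (Y * M * transpose_mat X))"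
  then have i: "i < a*c" and j: "j = 0" using V2 by auto
  have i': "i < c*a" using i by (simp add: mult.commute)
  have "(kron X Y * vecm M) $$ (i,j) = (\<Sum>l<b*d. kron X Y $$ (i,l) * vecm M $$ (l,0))"
    using index_mult_mat_sum[OF K1 V1 i] j by simp
  also have "\<dots> = (\<Sum>l<b*d. (\<lambda>u v. X $$ (i div c, u) * Y $$ (i mod c, v) * M $$ (v, u)) (l div d) (l mod d))"
    apply (rule sum.cong, simp)
    using X Y M i by (simp add: index_kron index_vecm div_less_of_less_mult mod_less_of_less_mult ac_simps)
  also have "\<dots> = (\<Sum>u<b. \<Sum>v<d. X $$ (i div c, u) * Y $$ (i mod c, v) * M $$ (v, u))"
    by (rule sum_lessThan_mult_div_mod)
  also have "\<dots> = (\<Sum>u<b. (\<Sum>v<d. Y $$ (i mod c, v) * M $$ (v, u)) * transpose_mat X $$ (u, i div c))"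
    using X i
    by (intro sum.cong refl) (simp add: sum_distrib_left sum_distrib_right ac_simps div_less_of_less_mult)
  also have "\<dots> = (Y * M * transpose_mat X) $$ (i mod c, i div c)"
    using X Y M i
    apply (subst index_mult_mat_sum[of _ c b _ a])
    apply (auto simp: div_less_of_less_mult mod_less_of_less_mult intro!: sum.cong)
    using mod_less_of_less_mult[OF i] by (auto simp: scalar_prod_def lessThan_atLeast0 intro!: sum.cong)
  also have "\<dots> = vecm (Y * M * transpose_mat X) $$ (i,j)"
    using index_vecm[OF YMX i'] j by simp
  finally show "(kron X Y * vecm M) $$ (i,j) = vecm (Y * M * transpose_mat X) $$ (i,j)" .
qed

lemma vecm_minus:
  "dim_row M = dim_row N \<Longrightarrow> dim_col M = dim_col N \<Longrightarrow> vecm (M - N) = vecm M - vecm N"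
  by (rule eq_matI) (auto simp: vecm_def div_less_of_less_mult' mod_less_of_less_mult')

lemma vecm_add:
  "dim_row M = dim_row N \<Longrightarrow> dim_col M = dim_col N \<Longrightarrow> vecm (M + N) = vecm M + vecm N"
  by (rule eq_matI) (auto simp: vecm_def div_less_of_less_mult' mod_less_of_less_mult')

lemma transpose_kron: "transpose_mat (kron X Y) = kron (transpose_mat X) (transpose_mat Y)"
  by (rule eq_matI) (auto simp: kron_def div_less_of_less_mult mod_less_of_less_mult)

lemma kron_add_left:
  fixes X :: "'a::semiring_0 mat"
  shows "dim_row X = dim_row Y \<Longrightarrow> dim_col X = dim_col Y \<Longrightarrow> kron (X + Y) Z = kron X Z + kron Y Z"
  by (rule eq_matI) (auto simp: kron_def distrib_right div_less_of_less_mult mod_less_of_less_mult)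

lemma kron_mult_vecm_one:
  fixes X :: "'a::comm_ring_1 mat"
  assumes "dim_col X = b" and "dim_col Y = b"
  shows "kron X Y * vecm (1\<^sub>m b) = vecm (Y * transpose_mat X)"
proof -
  have "X \<in> carrier_mat (dim_row X) b" and "Y \<in> carrier_mat (dim_row Y) b"
    using assms by (auto intro: carrier_matI)
  from kron_mult_vecm[OF this, of "1\<^sub>m b"] show ?thesis
    using assms by simp
qed

lemma kron_sum_mult_vecm:
  fixes F :: "'a::comm_ring_1 mat"
  assumes F: "F \<in> carrier_mat a a" and G: "G \<in> carrier_mat b b" and X: "X \<in> carrier_mat a b"
  shows "(kron (1\<^sub>m b) F + kron G (1\<^sub>m a)) * vecm X = vecm (F * X + X * transpose_mat G)"
proof -
  have k1: "kron (1\<^sub>m b) F \<in> carrier_mat (b*a) (b*a)" using F by (intro kron_carrier_mat) auto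
  have k2: "kron G (1\<^sub>m a) \<in> carrier_mat (b*a) (b*a)" using G by (intro kron_carrier_mat) auto
  have v: "vecm X \<in> carrier_mat (b*a) 1" using vecm_carrier_mat[OF X] by (simp add: mult.commute)
  have "(kron (1\<^sub>m b) F + kron G (1\<^sub>m a)) * vecm X = kron (1\<^sub>m b) F * vecm X + kron G (1\<^sub>m a) * vecm X"
    using k1 k2 v by (rule add_mult_distrib_mat)
  also have "\<dots> = vecm (F * X * transpose_mat (1\<^sub>m b)) + vecm (1\<^sub>m a * X * transpose_mat G)"
    using F G X
    by (simp add: kron_mult_vecm[of "1\<^sub>m b" b b F a a X] kron_mult_vecm[of G b b "1\<^sub>m a" a a X])
  also have "\<dots> = vecm (F * X) + vecm (X * transpose_mat G)" using F G X by simp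
  also have "\<dots> = vecm (F * X + X * transpose_mat G)" using F G X by (intro vecm_add[symmetric]) auto
  finally show ?thesis .
qed

section \<open>Inverses and matrix exponentials\<close>

lemma minv_inverse:
  fixes K :: "'a::field mat"
  assumes K: "K \<in> carrier_mat N N" and inv: "invertible_mat K"
  shows "minv K \<in> carrier_mat N N" "K * minv K = 1\<^sub>m N" "minv K * K = 1\<^sub>m N"
proof -
  from inv obtain B where B1: "K * B = 1\<^sub>m (dim_row K)" and B2: "B * K = 1\<^sub>m (dim_row B)"
    unfolding invertible_mat_def inverts_mat_def by auto
  have "dim_col B = N" using arg_cong[OF B1, of dim_col] K by simp
  moreover have "dim_row B = N" using arg_cong[OF B2, of dim_col] K by simp
  ultimately have Bc: "B \<in> carrier_mat N N" by auto
  have U: "K \<in> Units (ring_mat TYPE('a) N ())"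
    using K Bc B1 B2 \<open>dim_row B = N\<close> unfolding Units_def ring_mat_def by auto
  have "mat_inverse K \<noteq> None" using mat_inverse(1)[OF K, where b="()"] U by blast
  then obtain B' where "mat_inverse K = Some B'" by auto
  then have "K * B' = 1\<^sub>m N \<and> B' * K = 1\<^sub>m N \<and> B' \<in> carrier_mat N N" "minv K = B'"
    using mat_inverse(2)[OF K] by (auto simp: minv_def)
  then show "minv K \<in> carrier_mat N N" "K * minv K = 1\<^sub>m N" "minv K * K = 1\<^sub>m N" by auto
qed

lemma minv_mult_cancel:
  fixes K :: "'a::field mat"
  assumes K: "K \<in> carrier_mat N N" and inv: "invertible_mat K" and x: "x \<in> carrier_mat N k"
  shows "minv K * (K * x) = x"
proof -
  have "minv K * (K * x) = (minv K * K) * x"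
    using minv_inverse[OF K inv] K x by (subst assoc_mult_mat[of "minv K" N N K N x k]) auto
  then show ?thesis using minv_inverse[OF K inv] x by simp
qed

lemma mexp_carrier_mat: "X \<in> carrier_mat k k \<Longrightarrow> mexp X \<in> carrier_mat k k"
  by (auto simp: mexp_def)

lemma index_mexp:
  "X \<in> carrier_mat k k \<Longrightarrow> i < k \<Longrightarrow> j < k \<Longrightarrow>
   mexp X $$ (i,j) = (\<Sum>t. (X ^\<^sub>m t) $$ (i,j) / of_nat (fact t))"
  by (auto simp: mexp_def)

lemma mexp_dims [simp]: "dim_row (mexp X) = dim_row X" "dim_col (mexp X) = dim_row X"
  by (auto simp: mexp_def)

lemma norm_index_pow_mat_le:
  fixes X :: "complex mat"
  assumes X: "X \<in> carrier_mat k k"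
  shows "i < k \<Longrightarrow> j < k \<Longrightarrow>
    norm ((X ^\<^sub>m t) $$ (i,j)) \<le> (\<Sum>a<k. \<Sum>b<k. norm (X $$ (a,b))) ^ t"
proof (induction t arbitrary: j)
  case 0 then show ?case using X by auto
next
  case (Suc t)
  define N where "N = (\<Sum>a<k. \<Sum>b<k. norm (X $$ (a,b)))"
  have N0: "N \<ge> 0" unfolding N_def by (intro sum_nonneg) auto
  have col: "(\<Sum>b<k. norm (X $$ (b,j))) \<le> N"
  proof -
    have "(\<Sum>b<k. norm (X $$ (b,j))) \<le> (\<Sum>b<k. \<Sum>a<k. norm (X $$ (b,a)))"
      by (intro sum_mono member_le_sum) (auto simp: Suc.prems)
    also have "\<dots> = N" unfolding N_def ..
    finally show ?thesis .
  qed
  have "(X ^\<^sub>m Suc t) $$ (i,j) = (\<Sum>b<k. (X ^\<^sub>m t) $$ (i,b) * X $$ (b,j))"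
    unfolding pow_mat.simps(2) using X Suc.prems by (intro index_mult_mat_sum[where b=k]) auto
  then have "norm ((X ^\<^sub>m Suc t) $$ (i,j))
      \<le> (\<Sum>b<k. norm ((X ^\<^sub>m t) $$ (i,b)) * norm (X $$ (b,j)))"
    by (metis (no_types, lifting) norm_mult norm_sum sum.cong)
  also have "\<dots> \<le> (\<Sum>b<k. N ^ t * norm (X $$ (b,j)))"
    using Suc.IH Suc.prems unfolding N_def by (intro sum_mono mult_right_mono) auto
  also have "\<dots> = N^t * (\<Sum>b<k. norm (X $$ (b,j)))" by (simp add: sum_distrib_left)
  also have "\<dots> \<le> N^t * N" using col N0 by (intro mult_left_mono) auto
  finally show ?case unfolding N_def by (simp add: mult.commute)
qed

lemma summable_index_pow_mat:
  fixes X :: "complex mat"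
  assumes X: "X \<in> carrier_mat k k" and i: "i < k" and j: "j < k"
  shows "summable (\<lambda>t. (X ^\<^sub>m t) $$ (i,j) / of_nat (fact t))"
proof -
  define N where "N = (\<Sum>a<k. \<Sum>b<k. norm (X $$ (a,b)))"
  have g: "summable (\<lambda>t. inverse (fact t) * N ^ t)" by (rule summable_exp)
  show ?thesis
  proof (rule summable_comparison_test'[OF g])
    fix t :: nat
    have "norm ((X ^\<^sub>m t) $$ (i,j) / of_nat (fact t)) = norm ((X ^\<^sub>m t) $$ (i,j)) / fact t"
      by (simp add: norm_divide)
    also have "\<dots> \<le> N ^ t / fact t"
      using norm_index_pow_mat_le[OF X i j, of t] unfolding N_def by (intro divide_right_mono) auto
    finally show "norm ((X ^\<^sub>m t) $$ (i,j) / of_nat (fact t)) \<le> inverse (fact t) * N ^ t"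
      by (simp add: field_simps)
  qed
qed

lemma index_mexp_mult:
  fixes Z :: "complex mat"
  assumes Z: "Z \<in> carrier_mat k k" and R: "R \<in> carrier_mat k l" and i: "i < k" and j: "j < l"
  shows "(mexp Z * R) $$ (i,j) = (\<Sum>t. (Z ^\<^sub>m t * R) $$ (i,j) / of_nat (fact t))"
proof -
  have "(mexp Z * R) $$ (i,j) = (\<Sum>a<k. mexp Z $$ (i,a) * R $$ (a,j))"
    using mexp_carrier_mat[OF Z] R i j by (rule index_mult_mat_sum)
  also have "\<dots> = (\<Sum>a<k. \<Sum>t. (Z ^\<^sub>m t) $$ (i,a) / of_nat (fact t) * R $$ (a,j))"
  proof (intro sum.cong refl)
    fix a assume "a \<in> {..<k}" then have a: "a < k" by simp
    show "mexp Z $$ (i,a) * R $$ (a,j) = (\<Sum>t. (Z ^\<^sub>m t) $$ (i,a) / of_nat (fact t) * R $$ (a,j))"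
      using suminf_mult2[OF summable_index_pow_mat[OF Z i a], of "R $$ (a,j)"] Z i a by (simp add: index_mexp)
  qed
  also have "\<dots> = (\<Sum>t. \<Sum>a<k. (Z ^\<^sub>m t) $$ (i,a) / of_nat (fact t) * R $$ (a,j))"
    using Z i by (intro suminf_sum[symmetric] summable_mult2 summable_index_pow_mat) auto
  also have "\<dots> = (\<Sum>t. (Z ^\<^sub>m t * R) $$ (i,j) / of_nat (fact t))"
    using Z R i j
    by (intro suminf_cong) (subst index_mult_mat_sum[of _ k k _ l], auto simp: sum_divide_distrib field_simps)
  finally show ?thesis .
qed

lemma index_mult_mexp:
  fixes Z :: "complex mat"
  assumes Z: "Z \<in> carrier_mat k k" and R: "R \<in> carrier_mat l k" and i: "i < l" and j: "j < k"
  shows "(R * mexp Z) $$ (i,j) = (\<Sum>t. (R * Z ^\<^sub>m t) $$ (i,j) / of_nat (fact t))"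
proof -
  have "(R * mexp Z) $$ (i,j) = (\<Sum>a<k. R $$ (i,a) * mexp Z $$ (a,j))"
    using R mexp_carrier_mat[OF Z] i j by (rule index_mult_mat_sum)
  also have "\<dots> = (\<Sum>a<k. \<Sum>t. R $$ (i,a) * ((Z ^\<^sub>m t) $$ (a,j) / of_nat (fact t)))"
  proof (intro sum.cong refl)
    fix a assume "a \<in> {..<k}" then have a: "a < k" by simp
    show "R $$ (i,a) * mexp Z $$ (a,j) = (\<Sum>t. R $$ (i,a) * ((Z ^\<^sub>m t) $$ (a,j) / of_nat (fact t)))"
      using suminf_mult[OF summable_index_pow_mat[OF Z a j], of "R $$ (i,a)"] Z j a by (simp add: index_mexp)
  qed
  also have "\<dots> = (\<Sum>t. \<Sum>a<k. R $$ (i,a) * ((Z ^\<^sub>m t) $$ (a,j) / of_nat (fact t)))"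
    using Z j by (intro suminf_sum[symmetric] summable_mult summable_index_pow_mat) auto
  also have "\<dots> = (\<Sum>t. (R * Z ^\<^sub>m t) $$ (i,j) / of_nat (fact t))"
    using Z R i j
    by (intro suminf_cong) (subst index_mult_mat_sum[of _ l k _ k], auto simp: sum_divide_distrib field_simps)
  finally show ?thesis .
qed

lemma pow_mat_intertwine:
  fixes X :: "'a::comm_ring_1 mat"
  assumes X: "X \<in> carrier_mat k k" and Y: "Y \<in> carrier_mat l l" and Q: "Q \<in> carrier_mat k l"
    and XQ: "X * Q = Q * Y"
  shows "X ^\<^sub>m t * Q = Q * Y ^\<^sub>m t"
proof (induction t)
  case 0 then show ?case using X Y Q by simp
next
  case (Suc t)
  have "X ^\<^sub>m Suc t * Q = X ^\<^sub>m t * (X * Q)" using X Q by (simp add: assoc_mult_mat[of _ k k _ k _ l])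
  also have "\<dots> = (X ^\<^sub>m t * Q) * Y" using X Q Y XQ by (simp add: assoc_mult_mat[of _ k k _ l _ l])
  also have "\<dots> = Q * (Y ^\<^sub>m t * Y)" using Suc X Q Y by (simp add: assoc_mult_mat[of _ k l _ l _ l])
  finally show ?case by simp
qed

lemma mexp_intertwine:
  fixes X :: "complex mat"
  assumes X: "X \<in> carrier_mat k k" and Y: "Y \<in> carrier_mat l l" and Q: "Q \<in> carrier_mat k l"
    and XQ: "X * Q = Q * Y"
  shows "mexp X * Q = Q * mexp Y"
proof (rule eq_matI)
  fix i j assume "i < dim_row (Q * mexp Y)" "j < dim_col (Q * mexp Y)"
  then have i: "i < k" and j: "j < l" using Q Y mexp_carrier_mat[OF Y] by auto
  show "(mexp X * Q) $$ (i,j) = (Q * mexp Y) $$ (i,j)"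
    using index_mexp_mult[OF X Q i j] index_mult_mexp[OF Y Q i j] pow_mat_intertwine[OF X Y Q XQ] by simp
qed (use X Q Y mexp_carrier_mat[OF X] mexp_carrier_mat[OF Y] in auto)

lemma transpose_pow_mat:
  fixes X :: "'a::comm_ring_1 mat"
  assumes X: "X \<in> carrier_mat k k"
  shows "transpose_mat X ^\<^sub>m t = transpose_mat (X ^\<^sub>m t)"
proof (induction t)
  case 0 then show ?case using X by simp
next
  case (Suc t)
  have XT: "transpose_mat X \<in> carrier_mat k k" using X by simp
  have c: "X * X ^\<^sub>m t = X ^\<^sub>m t * X" using pow_mat_intertwine[OF X X X refl] by simp
  have "transpose_mat X ^\<^sub>m Suc t = transpose_mat (X ^\<^sub>m t) * transpose_mat X" using Suc by simp
  also have "\<dots> = transpose_mat (X * X ^\<^sub>m t)" using X by (simp add: transpose_mult[of _ k k _ k])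
  also have "\<dots> = transpose_mat (X ^\<^sub>m Suc t)" using c by simp
  finally show ?case .
qed

lemma transpose_mexp:
  assumes X: "X \<in> carrier_mat k k"
  shows "transpose_mat (mexp X) = mexp (transpose_mat X)"
  by (rule eq_matI) (use X in \<open>auto simp: mexp_def transpose_pow_mat[OF X]\<close>)

lemma transpose_smult_mat: "transpose_mat (k \<cdot>\<^sub>m X) = k \<cdot>\<^sub>m transpose_mat X"
  by (rule eq_matI) auto

lemma mexp_smult_intertwine:
  assumes X: "X \<in> carrier_mat k k" and Y: "Y \<in> carrier_mat l l" and Q: "Q \<in> carrier_mat k l"
    and XQ: "X * Q = Q * Y"
  shows "mexp (c \<cdot>\<^sub>m X) * Q = Q * mexp (c \<cdot>\<^sub>m Y)"
proof (rule mexp_intertwine)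
  show "c \<cdot>\<^sub>m X * Q = Q * (c \<cdot>\<^sub>m Y)"
    using X Y Q XQ by (simp add: mult_smult_assoc_mat[OF X Q] mult_smult_distrib[OF Q Y])
qed (use X Y Q in auto)

lemma transpose_mexp_smult:
  "X \<in> carrier_mat k k \<Longrightarrow> transpose_mat (mexp (c \<cdot>\<^sub>m X)) = mexp (c \<cdot>\<^sub>m transpose_mat X)"
  by (subst transpose_mexp[of _ k]) (auto simp: transpose_smult_mat)

section \<open>Matrix algebra driven by dimensions\<close>

text \<open>Carrier conditions are turned into equations between dimensions, which the simplifier decides by
  computing dimensions. The variants of the library rules below carry no side condition with a
  dimension that is not determined by the rewritten term, so they work as simplification rules;
  in particular the first one brings every product into right-associated normal form.\<close>

lemma carrier_mat_iff_dims: "X \<in> carrier_mat a b \<longleftrightarrow> dim_row X = a \<and> dim_col X = b"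
  unfolding carrier_mat_def by simp

declare carrier_matD[simp del] carrier_mat_iff_dims[simp] assoc_mult_mat[simp del]

lemma assoc_mult_mat_dim [simp]:
  "dim_col X = dim_row Y \<Longrightarrow> dim_col Y = dim_row Z \<Longrightarrow> X * Y * Z = X * (Y * Z)"
  by (rule assoc_mult_mat[of X "dim_row X" "dim_col X" Y "dim_col Y" Z "dim_col Z"]) auto

lemma transpose_mult_dim:
  fixes X :: "'a::comm_semiring_0 mat"
  shows "dim_col X = dim_row Y \<Longrightarrow> transpose_mat (X * Y) = transpose_mat Y * transpose_mat X"
  by (rule transpose_mult[of X "dim_row X" "dim_col X" Y "dim_col Y"]) auto

lemma transpose_add_dim:
  "dim_row X = dim_row Y \<Longrightarrow> dim_col X = dim_col Y \<Longrightarrow>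
   transpose_mat (X + Y) = transpose_mat X + transpose_mat Y"
  by (rule transpose_add[of X "dim_row Y" "dim_col Y"]) auto

lemma transpose_minus_dim:
  "dim_row X = dim_row Y \<Longrightarrow> dim_col X = dim_col Y \<Longrightarrow>
   transpose_mat (X - Y) = transpose_mat X - transpose_mat Y"
  by (rule transpose_minus[of X "dim_row Y" "dim_col Y"]) auto

lemma mult_add_distrib_dim:
  "dim_col X = dim_row Y \<Longrightarrow> dim_row Z = dim_row Y \<Longrightarrow> dim_col Z = dim_col Y \<Longrightarrow>
   X * (Y + Z) = X * Y + X * Z"
  by (rule mult_add_distrib_mat[of X "dim_row X" "dim_col X" Y "dim_col Y" Z]) auto

lemma add_mult_distrib_dim:
  "dim_row Y = dim_row X \<Longrightarrow> dim_col Y = dim_col X \<Longrightarrow> dim_col X = dim_row Z \<Longrightarrow>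
   (X + Y) * Z = X * Z + Y * Z"
  by (rule add_mult_distrib_mat[of X "dim_row X" "dim_col X" Y Z "dim_col Z"]) auto

lemma mult_minus_distrib_dim:
  fixes X :: "'a::ring mat"
  shows "dim_col X = dim_row Y \<Longrightarrow> dim_row Z = dim_row Y \<Longrightarrow> dim_col Z = dim_col Y \<Longrightarrow>
   X * (Y - Z) = X * Y - X * Z"
  by (rule mult_minus_distrib_mat[of X "dim_row X" "dim_col X" Y "dim_col Y" Z]) auto

lemma minus_mult_distrib_dim:
  fixes X :: "'a::ring mat"
  shows "dim_row Y = dim_row X \<Longrightarrow> dim_col Y = dim_col X \<Longrightarrow> dim_col X = dim_row Z \<Longrightarrow>
   (X - Y) * Z = X * Z - Y * Z"
  by (rule minus_mult_distrib_mat[of X "dim_row X" "dim_col X" Y Z "dim_col Z"]) auto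

lemma add_eq_diff_of_uminus_diff:
  fixes X :: "'a::ab_group_add mat"
  assumes eq: "- X - Y = Z - U"
    and "X \<in> carrier_mat a b" "Y \<in> carrier_mat a b" "Z \<in> carrier_mat a b" "U \<in> carrier_mat a b"
  shows "X + Y = U - Z"
proof (rule eq_matI)
  fix i j assume "i < dim_row (U - Z)" "j < dim_col (U - Z)"
  then have ij: "i < a" "j < b" using assms(2-5) by auto
  have "(- X - Y) $$ (i,j) = (Z - U) $$ (i,j)"
    using eq by (rule arg_cong)
  then have e: "- X $$ (i,j) - Y $$ (i,j) = Z $$ (i,j) - U $$ (i,j)"
    using ij assms(2-5) by simp
  have "X $$ (i,j) + Y $$ (i,j) = - (- X $$ (i,j) - Y $$ (i,j))"
    by simp
  also have "\<dots> = U $$ (i,j) - Z $$ (i,j)"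
    unfolding e by simp
  finally have "X $$ (i,j) + Y $$ (i,j) = U $$ (i,j) - Z $$ (i,j)" .
  then show "(X + Y) $$ (i,j) = (U - Z) $$ (i,j)" using ij assms(2-5) by simp
qed (use assms(2-5) in auto)

lemma kron_diff_mult_vecm_one:
  fixes X1 :: "'a::comm_ring_1 mat"
  assumes "X1 \<in> carrier_mat a b" "Y1 \<in> carrier_mat c b" "X2 \<in> carrier_mat a b" "Y2 \<in> carrier_mat c b"
  shows "(kron X1 Y1 - kron X2 Y2) * vecm (1\<^sub>m b)
    = vecm (Y1 * transpose_mat X1 - Y2 * transpose_mat X2)"
proof -
  have "(kron X1 Y1 - kron X2 Y2) * vecm (1\<^sub>m b) = kron X1 Y1 * vecm (1\<^sub>m b) - kron X2 Y2 * vecm (1\<^sub>m b)"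
    using assms by (intro minus_mult_distrib_mat[of _ "a*c" "b*b"]) auto
  then show ?thesis
    using assms by (simp add: kron_mult_vecm_one vecm_minus)
qed

lemma transpose_vecm_mult_kron:
  fixes X :: "'a::comm_ring_1 mat"
  assumes "X \<in> carrier_mat a b" "Y \<in> carrier_mat c d" "M \<in> carrier_mat c a"
  shows "transpose_mat (vecm M) * kron X Y = transpose_mat (vecm (transpose_mat Y * M * X))"
proof -
  have "transpose_mat (vecm M) * kron X Y = transpose_mat (transpose_mat (kron X Y) * vecm M)"
    using assms by (simp add: transpose_mult_dim mult.commute)
  also have "transpose_mat (kron X Y) * vecm M = vecm (transpose_mat Y * M * X)"
    using assms kron_mult_vecm[of "transpose_mat X" b a "transpose_mat Y" d c M]
    by (simp add: transpose_kron)
  finally show ?thesis .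
qed

lemma transpose_vecm_mult_kron_sum:
  fixes F :: "'a::comm_ring_1 mat"
  assumes "F \<in> carrier_mat a a" "G \<in> carrier_mat b b" "X \<in> carrier_mat a b"
  shows "transpose_mat (vecm X) * (kron (1\<^sub>m b) F + kron G (1\<^sub>m a))
    = transpose_mat (vecm (transpose_mat F * X + X * G))"
proof -
  let ?K = "kron (1\<^sub>m b) F + kron G (1\<^sub>m a)"
  have "transpose_mat (vecm X) * ?K = transpose_mat (transpose_mat ?K * vecm X)"
    using assms by (simp add: transpose_mult_dim mult.commute)
  also have "transpose_mat ?K = kron (1\<^sub>m b) (transpose_mat F) + kron (transpose_mat G) (1\<^sub>m a)"
    using assms by (simp add: transpose_add_dim transpose_kron)
  also have "\<dots> * vecm X = vecm (transpose_mat F * X + X * G)"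
    using assms kron_sum_mult_vecm[of "transpose_mat F" a "transpose_mat G" b X] by simp
  finally show ?thesis .
qed

lemma mult_minv_diff_eq:
  fixes Kh :: "'a::field mat"
  assumes Kh: "Kh \<in> carrier_mat N N" "invertible_mat Kh" and K: "K \<in> carrier_mat M M" "invertible_mat K"
    and X: "X \<in> carrier_mat q N" and Y: "Y \<in> carrier_mat q M"
    and Uh: "Uh \<in> carrier_mat N k" and U: "U \<in> carrier_mat M k" and Eh: "Eh \<in> carrier_mat N k"
    and v: "v \<in> carrier_mat k 1" and y: "y \<in> carrier_mat N 1" and z: "z \<in> carrier_mat M 1"
    and Uh_v: "Uh * v = Kh * y + Eh * v" and U_v: "U * v = K * z" and Xy: "X * y = Y * z"
  shows "X * minv Kh * Uh * v - Y * minv K * U * v = X * minv Kh * Eh * v"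
proof -
  have mKh: "minv Kh \<in> carrier_mat N N" and mK: "minv K \<in> carrier_mat M M"
    using minv_inverse(1) Kh K by auto
  note carriers = Kh K X Y Uh U Eh v y z mKh mK
  have "X * minv Kh * Uh * v = X * (minv Kh * (Kh * y) + minv Kh * (Eh * v))"
    using carriers by (simp add: Uh_v mult_add_distrib_dim)
  also have "\<dots> = Y * z + X * minv Kh * Eh * v"
    using carriers by (simp add: minv_mult_cancel[of Kh N y 1] mult_add_distrib_dim flip: Xy)
  finally have L: "X * minv Kh * Uh * v = Y * z + X * minv Kh * Eh * v" .
  have R: "Y * minv K * U * v = Y * z"
    using carriers by (simp add: U_v minv_mult_cancel[of K M z 1])
  show ?thesis
    unfolding L R using carriers by (intro eq_matI) auto
qed

lemma weighted_mult_minv_diff_eq: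
  fixes l :: "'a::comm_ring_1 mat"
  assumes dims: "l \<in> carrier_mat 1 s" "Gh \<in> carrier_mat s R" "G \<in> carrier_mat s N" "G2 \<in> carrier_mat s N"
      "kV \<in> carrier_mat N R" "kP \<in> carrier_mat R N" "mKh \<in> carrier_mat R R" "mK \<in> carrier_mat N N"
      "Er \<in> carrier_mat R R" "En \<in> carrier_mat N N" "MH \<in> carrier_mat R k" "ME \<in> carrier_mat R k"
      "MR \<in> carrier_mat N k" "v \<in> carrier_mat k 1"
    and Gh: "Gh = G * kV"
    and G2: "l * G2 * (kV * mKh * kP - mK) = l * G * (kV * mKh * kP - mK)"
    and MH: "MH * v = ME * v + kP * (MR * v)"
    and Er: "Er * kP = kP * En"
  shows "l * Gh * mKh * Er * MH * v - l * G * mK * En * MR * v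
    = l * Gh * mKh * Er * ME * v + l * G2 * (kV * mKh * kP - mK) * En * MR * v"
proof -
  define w where "w = MR * v"
  define Md where "Md = kV * mKh * kP - mK"
  have w: "w \<in> carrier_mat N 1" and Md: "Md \<in> carrier_mat N N"
    using dims by (simp_all add: w_def Md_def)
  have "Er * (kP * w) = (Er * kP) * w"
    using dims w by simp
  also have "\<dots> = kP * (En * w)"
    using dims w by (simp add: Er)
  finally have Erw: "Er * (kP * w) = kP * (En * w)" .
  have L: "l * Gh * mKh * Er * MH * v
      = l * Gh * mKh * Er * ME * v + l * (G * (kV * (mKh * (kP * (En * w)))))"
    using dims w by (simp add: MH w_def[symmetric] Gh Erw mult_add_distrib_dim)
  have "l * G2 * (kV * mKh * kP - mK) * En * MR * v = (l * G2 * Md) * (En * w)"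
    unfolding Md_def w_def using dims by simp
  also have "\<dots> = (l * G * Md) * (En * w)"
    using G2 by (simp only: Md_def)
  also have "\<dots> = l * (G * (kV * (mKh * (kP * (En * w))))) - l * (G * (mK * (En * w)))"
    unfolding Md_def using dims w by (simp add: minus_mult_distrib_dim mult_minus_distrib_dim)
  finally have E: "l * G2 * (kV * mKh * kP - mK) * En * MR * v
      = l * (G * (kV * (mKh * (kP * (En * w))))) - l * (G * (mK * (En * w)))" .
  have R: "l * G * mK * En * MR * v = l * (G * (mK * (En * w)))"
    using dims by (simp add: w_def)
  show ?thesis
    unfolding L E R using dims w by (intro eq_matI) (auto simp: algebra_simps)
qed

section \<open>One step of the time-limited IRKA iteration\<close>

(* Bt, Ct and c stand for the paper's B~ = S Bhat, C~ = Chat S^-1 and the time horizon T. *)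
locale tl_irka_projection =
  fixes A B C V W D Bt Ct :: "complex mat" and c :: complex and n m p r :: nat
  assumes A_carrier: "A \<in> carrier_mat n n" and B_carrier: "B \<in> carrier_mat n m"
    and C_carrier: "C \<in> carrier_mat p n" and V_carrier: "V \<in> carrier_mat n r"
    and W_carrier: "W \<in> carrier_mat n r" and D_carrier: "D \<in> carrier_mat r r"
    and Bt_carrier: "Bt \<in> carrier_mat r m" and Ct_carrier: "Ct \<in> carrier_mat p r"
    and D_symmetric: "transpose_mat D = D"
    and WtV_invertible: "invertible_mat (transpose_mat W * V)"
    and sylvester_V: "- (V * D) - A * V
      = B * transpose_mat Bt - mexp (c \<cdot>\<^sub>m A) * B * transpose_mat Bt * mexp (c \<cdot>\<^sub>m D)"
    and sylvester_W: "- (W * D) - transpose_mat A * W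
      = transpose_mat C * Ct - mexp (c \<cdot>\<^sub>m transpose_mat A) * transpose_mat C * Ct * mexp (c \<cdot>\<^sub>m D)"
begin

abbreviation E :: "complex mat \<Rightarrow> complex mat" where
  "E X \<equiv> mexp (c \<cdot>\<^sub>m X)"

definition WtV :: "complex mat" where
  "WtV = transpose_mat W * V"

definition P :: "complex mat" where
  "P = minv WtV * transpose_mat W"

definition Proj :: "complex mat" where
  "Proj = V * P"

definition Ahat :: "complex mat" where
  "Ahat = P * A * V"

definition Bhat :: "complex mat" where
  "Bhat = P * B"

definition Chat :: "complex mat" where
  "Chat = C * V"

definition Berr :: "complex mat" where
  "Berr = P * (E (A * Proj) - E A) * B"

definition Cerr :: "complex mat" where
  "Cerr = transpose_mat V * (E (transpose_mat A * transpose_mat Proj) - E (transpose_mat A)) * transpose_mat C"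

lemma dim_data [simp]:
  "dim_row A = n" "dim_col A = n" "dim_row B = n" "dim_col B = m" "dim_row C = p" "dim_col C = n"
  "dim_row V = n" "dim_col V = r" "dim_row W = n" "dim_col W = r" "dim_row D = r" "dim_col D = r"
  "dim_row Bt = r" "dim_col Bt = m" "dim_row Ct = p" "dim_col Ct = r"
  using A_carrier B_carrier C_carrier V_carrier W_carrier D_carrier Bt_carrier Ct_carrier by auto

lemma WtV_minv: "minv WtV \<in> carrier_mat r r" "WtV * minv WtV = 1\<^sub>m r" "minv WtV * WtV = 1\<^sub>m r"
  using minv_inverse[of WtV r] WtV_invertible by (auto simp: WtV_def)

lemma dim_reduced [simp]:
  "dim_row WtV = r" "dim_col WtV = r" "dim_row (minv WtV) = r" "dim_col (minv WtV) = r"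
  "dim_row P = r" "dim_col P = n" "dim_row Proj = n" "dim_col Proj = n"
  "dim_row Ahat = r" "dim_col Ahat = r" "dim_row Bhat = r" "dim_col Bhat = m"
  "dim_row Chat = p" "dim_col Chat = r" "dim_row Berr = r" "dim_col Berr = m"
  "dim_row Cerr = r" "dim_col Cerr = p"
  using WtV_minv(1)
  by (auto simp: WtV_def P_def Proj_def Ahat_def Bhat_def Chat_def Berr_def Cerr_def)

lemma P_mult_V: "P * V = 1\<^sub>m r"
  by (simp add: P_def WtV_def[symmetric] WtV_minv)

lemma P_mult_V_mult: "dim_row X = r \<Longrightarrow> P * (V * X) = X"
  by (simp add: P_mult_V flip: assoc_mult_mat_dim)

lemma WtV_mult_P: "WtV * P = transpose_mat W"
proof -
  have "WtV * P = WtV * minv WtV * transpose_mat W"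
    by (simp add: P_def)
  also have "\<dots> = transpose_mat W"
    by (simp add: WtV_minv)
  finally show ?thesis .
qed

lemma WtV_mult_Ahat: "WtV * Ahat = transpose_mat W * (A * V)"
proof -
  have "WtV * Ahat = WtV * P * (A * V)"
    by (simp add: Ahat_def)
  then show ?thesis
    by (simp add: WtV_mult_P)
qed

lemma WtV_mult_Bhat: "WtV * Bhat = transpose_mat W * B"
proof -
  have "WtV * Bhat = WtV * P * B"
    by (simp add: Bhat_def)
  then show ?thesis
    by (simp add: WtV_mult_P)
qed

lemma E_Ahat_mult_P: "E Ahat * P = P * E (A * Proj)"
  by (rule mexp_smult_intertwine[where k = r and l = n]) (simp_all add: Ahat_def Proj_def)

lemma E_Proj_A_mult_V: "E (Proj * A) * V = V * E Ahat"
  by (rule mexp_smult_intertwine[where k = n and l = r]) (simp_all add: Ahat_def Proj_def)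

lemma transpose_E_D: "transpose_mat (E D) = E D"
  using transpose_mexp_smult[of D r] D_symmetric by simp

lemma sylvester_V_sum: "V * D + A * V = E A * B * transpose_mat Bt * E D - B * transpose_mat Bt"
  by (rule add_eq_diff_of_uminus_diff[OF sylvester_V, where a = n and b = r]) simp_all

lemma sylvester_V_transposed:
  "D * transpose_mat V + transpose_mat V * transpose_mat A
   = E D * Bt * transpose_mat (E A * B) - Bt * transpose_mat B"
proof -
  have "transpose_mat (V * D + A * V)
      = transpose_mat (E A * B * transpose_mat Bt * E D - B * transpose_mat Bt)"
    by (simp only: sylvester_V_sum)
  then show ?thesis
    by (simp add: transpose_add_dim transpose_minus_dim transpose_mult_dim D_symmetric transpose_E_D)
qed

lemma sylvester_W_sum:
  "D * transpose_mat W + transpose_mat W * A = E D * transpose_mat Ct * C * E A - transpose_mat Ct * C"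
proof -
  have "transpose_mat (- (W * D) - transpose_mat A * W)
      = transpose_mat (transpose_mat C * Ct - E (transpose_mat A) * transpose_mat C * Ct * E D)"
    by (simp only: sylvester_W)
  then have "- (D * transpose_mat W) - transpose_mat W * A
      = transpose_mat Ct * C - E D * transpose_mat Ct * C * E A"
    by (simp add: transpose_minus_dim transpose_uminus transpose_mult_dim D_symmetric transpose_E_D
        transpose_mexp_smult[of "transpose_mat A" n])
  then show ?thesis
    by (rule add_eq_diff_of_uminus_diff[where a = r and b = n]) simp_all
qed

lemma E_Ahat_mult_Bhat: "E Ahat * Bhat = Berr + P * (E A * B)"
proof -
  have "E Ahat * Bhat = E Ahat * P * B"
    by (simp add: Bhat_def)
  also have "\<dots> = P * (E (A * Proj) * B)"
    by (simp add: E_Ahat_mult_P)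
  also have "\<dots> = Berr + P * (E A * B)"
    by (rule eq_matI) (simp_all add: Berr_def minus_mult_distrib_dim mult_minus_distrib_dim)
  finally show ?thesis .
qed

lemma reduced_sylvester_V:
  "E Ahat * Bhat * transpose_mat (E D * Bt) - Bhat * transpose_mat Bt
   = (D + Ahat) + Berr * transpose_mat (E D * Bt)"
proof -
  define G where "G = E A * B * transpose_mat Bt * E D"
  have G: "G \<in> carrier_mat n r"
    by (simp add: G_def)
  have "D + Ahat = P * (V * D + A * V)"
    by (simp add: Ahat_def P_mult_V_mult mult_add_distrib_dim)
  also have "\<dots> = P * G - P * (B * transpose_mat Bt)"
    unfolding sylvester_V_sum G_def[symmetric] using G by (simp add: mult_minus_distrib_dim)
  finally have AhD: "D + Ahat = P * G - P * (B * transpose_mat Bt)" .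
  have EBX: "E Ahat * Bhat * transpose_mat (E D * Bt) = Berr * transpose_mat (E D * Bt) + P * G"
    unfolding E_Ahat_mult_Bhat G_def
    by (simp add: add_mult_distrib_dim transpose_mult_dim transpose_E_D)
  show ?thesis
    unfolding EBX AhD by (rule eq_matI) (use G in \<open>simp_all add: Bhat_def\<close>)
qed

lemma sylvester_W_mult_V:
  "(D * transpose_mat W + transpose_mat W * A) * V = D * WtV + WtV * Ahat"
  unfolding WtV_mult_Ahat by (simp add: WtV_def add_mult_distrib_dim)

lemma reduced_sylvester_W:
  "E D * transpose_mat Ct * Chat * E Ahat - transpose_mat Ct * Chat
   = (D * WtV + WtV * Ahat) + E D * transpose_mat Ct * transpose_mat Cerr"
proof -
  define Y where "Y = E D * transpose_mat Ct"
  have Y: "Y \<in> carrier_mat r p"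
    by (simp add: Y_def)
  have CerrT: "transpose_mat Cerr = C * (E (Proj * A) * V) - C * (E A * V)"
    by (simp add: Cerr_def transpose_mult_dim transpose_minus_dim mult_minus_distrib_dim
        minus_mult_distrib_dim transpose_mexp_smult[of "transpose_mat A * transpose_mat Proj" n]
        transpose_mexp_smult[of "transpose_mat A" n])
  have "Y * Chat * E Ahat = Y * (C * (E (Proj * A) * V))"
    using Y by (simp add: Chat_def E_Proj_A_mult_V)
  then have YCE: "Y * Chat * E Ahat = Y * transpose_mat Cerr + Y * (C * (E A * V))"
    unfolding CerrT using Y by (simp add: mult_minus_distrib_dim) (rule eq_matI, use Y in simp_all)
  have "D * WtV + WtV * Ahat = Y * (C * (E A * V)) - transpose_mat Ct * (C * V)"
    unfolding sylvester_W_mult_V[symmetric] sylvester_W_sum Y_def by (simp add: minus_mult_distrib_dim)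
  then show ?thesis
    unfolding Y_def[symmetric] YCE by (intro eq_matI) (use Y in \<open>simp_all add: Chat_def\<close>)
qed

abbreviation K2hat :: "complex mat" where
  "K2hat \<equiv> kron (1\<^sub>m r) D + kron Ahat (1\<^sub>m r)"

abbreviation K2 :: "complex mat" where
  "K2 \<equiv> kron (1\<^sub>m n) D + kron A (1\<^sub>m r)"

lemma error_c:
  assumes "invertible_mat (kron (1\<^sub>m r) Ahat + kron D (1\<^sub>m r))"
    and "invertible_mat (kron (1\<^sub>m r) A + kron D (1\<^sub>m n))"
  shows "kron (1\<^sub>m r) Chat * minv (kron (1\<^sub>m r) Ahat + kron D (1\<^sub>m r))
        * (kron (E D * Bt) (E Ahat * Bhat) - kron Bt Bhat) * vecm (1\<^sub>m m)
    - kron (1\<^sub>m r) C * minv (kron (1\<^sub>m r) A + kron D (1\<^sub>m n))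
        * (kron (E D * Bt) (E A * B) - kron Bt B) * vecm (1\<^sub>m m)
    = kron (1\<^sub>m r) Chat * minv (kron (1\<^sub>m r) Ahat + kron D (1\<^sub>m r))
        * kron (E D * Bt) Berr * vecm (1\<^sub>m m)"
proof (rule mult_minv_diff_eq[where N = "r * r" and M = "r * n" and q = "r * p" and k = "m * m"
      and y = "vecm (1\<^sub>m r)" and z = "vecm V"])
  have "(kron (E D * Bt) (E Ahat * Bhat) - kron Bt Bhat) * vecm (1\<^sub>m m)
      = vecm (E Ahat * Bhat * transpose_mat (E D * Bt) - Bhat * transpose_mat Bt)"
    by (rule kron_diff_mult_vecm_one[where a = r and c = r]) simp_all
  also have "\<dots> = vecm (D + Ahat) + vecm (Berr * transpose_mat (E D * Bt))"
    unfolding reduced_sylvester_V by (simp add: vecm_add)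
  also have "\<dots> = (kron (1\<^sub>m r) Ahat + kron D (1\<^sub>m r)) * vecm (1\<^sub>m r)
      + kron (E D * Bt) Berr * vecm (1\<^sub>m m)"
    using kron_sum_mult_vecm[of Ahat r D r "1\<^sub>m r"] comm_add_mat[of D r r Ahat]
    by (simp add: D_symmetric kron_mult_vecm_one)
  finally show "(kron (E D * Bt) (E Ahat * Bhat) - kron Bt Bhat) * vecm (1\<^sub>m m)
      = (kron (1\<^sub>m r) Ahat + kron D (1\<^sub>m r)) * vecm (1\<^sub>m r)
      + kron (E D * Bt) Berr * vecm (1\<^sub>m m)" .
  have "(kron (E D * Bt) (E A * B) - kron Bt B) * vecm (1\<^sub>m m)
      = vecm (E A * B * transpose_mat (E D * Bt) - B * transpose_mat Bt)"
    by (rule kron_diff_mult_vecm_one[where a = r and c = n]) simp_all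
  also have "\<dots> = vecm (V * D + A * V)"
    by (simp add: sylvester_V_sum transpose_mult_dim transpose_E_D)
  also have "\<dots> = vecm (A * V + V * D)"
    using comm_add_mat[of "V * D" n r "A * V"] by simp
  also have "\<dots> = (kron (1\<^sub>m r) A + kron D (1\<^sub>m n)) * vecm V"
    using kron_sum_mult_vecm[of A n D r V] by (simp add: D_symmetric)
  finally show "(kron (E D * Bt) (E A * B) - kron Bt B) * vecm (1\<^sub>m m)
      = (kron (1\<^sub>m r) A + kron D (1\<^sub>m n)) * vecm V" .
  show "kron (1\<^sub>m r) Chat * vecm (1\<^sub>m r) = kron (1\<^sub>m r) C * vecm V"
    using kron_mult_vecm[of "1\<^sub>m r" r r C p n V] by (simp add: Chat_def kron_mult_vecm_one)
qed (use assms in \<open>simp_all add: mult.commute\<close>)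

lemma error_b:
  assumes "invertible_mat (kron (1\<^sub>m r) D + kron (transpose_mat Ahat) (1\<^sub>m r))"
    and "invertible_mat (kron (1\<^sub>m n) D + kron (transpose_mat A) (1\<^sub>m r))"
  shows "kron (transpose_mat Bhat) (1\<^sub>m r) * minv (kron (1\<^sub>m r) D + kron (transpose_mat Ahat) (1\<^sub>m r))
        * (kron (E (transpose_mat Ahat) * transpose_mat Chat) (E D * transpose_mat Ct)
           - kron (transpose_mat Chat) (transpose_mat Ct)) * vecm (1\<^sub>m p)
    - kron (transpose_mat B) (1\<^sub>m r) * minv (kron (1\<^sub>m n) D + kron (transpose_mat A) (1\<^sub>m r))
        * (kron (E (transpose_mat A) * transpose_mat C) (E D * transpose_mat Ct)
           - kron (transpose_mat C) (transpose_mat Ct)) * vecm (1\<^sub>m p)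
    = kron (transpose_mat Bhat) (1\<^sub>m r) * minv (kron (1\<^sub>m r) D + kron (transpose_mat Ahat) (1\<^sub>m r))
        * kron Cerr (E D * transpose_mat Ct) * vecm (1\<^sub>m p)"
proof (rule mult_minv_diff_eq[where N = "r * r" and M = "n * r" and q = "m * r" and k = "p * p"
      and y = "vecm WtV" and z = "vecm (transpose_mat W)"])
  have "(kron (E (transpose_mat Ahat) * transpose_mat Chat) (E D * transpose_mat Ct)
        - kron (transpose_mat Chat) (transpose_mat Ct)) * vecm (1\<^sub>m p)
      = vecm (E D * transpose_mat Ct * transpose_mat (E (transpose_mat Ahat) * transpose_mat Chat)
        - transpose_mat Ct * transpose_mat (transpose_mat Chat))"
    by (rule kron_diff_mult_vecm_one[where a = r and c = r]) simp_all
  also have "\<dots> = vecm (D * WtV + WtV * Ahat) + vecm (E D * transpose_mat Ct * transpose_mat Cerr)"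
    using reduced_sylvester_W
    by (simp add: vecm_add transpose_mult_dim transpose_mexp_smult[of "transpose_mat Ahat" r])
  also have "\<dots> = (kron (1\<^sub>m r) D + kron (transpose_mat Ahat) (1\<^sub>m r)) * vecm WtV
      + kron Cerr (E D * transpose_mat Ct) * vecm (1\<^sub>m p)"
    using kron_sum_mult_vecm[of D r "transpose_mat Ahat" r WtV] by (simp add: kron_mult_vecm_one)
  finally show "(kron (E (transpose_mat Ahat) * transpose_mat Chat) (E D * transpose_mat Ct)
        - kron (transpose_mat Chat) (transpose_mat Ct)) * vecm (1\<^sub>m p)
      = (kron (1\<^sub>m r) D + kron (transpose_mat Ahat) (1\<^sub>m r)) * vecm WtV
      + kron Cerr (E D * transpose_mat Ct) * vecm (1\<^sub>m p)" .
  have "(kron (E (transpose_mat A) * transpose_mat C) (E D * transpose_mat Ct)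
        - kron (transpose_mat C) (transpose_mat Ct)) * vecm (1\<^sub>m p)
      = vecm (E D * transpose_mat Ct * transpose_mat (E (transpose_mat A) * transpose_mat C)
        - transpose_mat Ct * transpose_mat (transpose_mat C))"
    by (rule kron_diff_mult_vecm_one[where a = n and c = r]) simp_all
  also have "\<dots> = vecm (D * transpose_mat W + transpose_mat W * A)"
    by (simp add: sylvester_W_sum transpose_mult_dim transpose_mexp_smult[of "transpose_mat A" n])
  also have "\<dots> = (kron (1\<^sub>m n) D + kron (transpose_mat A) (1\<^sub>m r)) * vecm (transpose_mat W)"
    using kron_sum_mult_vecm[of D r "transpose_mat A" n "transpose_mat W"] by simp
  finally show "(kron (E (transpose_mat A) * transpose_mat C) (E D * transpose_mat Ct)
        - kron (transpose_mat C) (transpose_mat Ct)) * vecm (1\<^sub>m p)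
      = (kron (1\<^sub>m n) D + kron (transpose_mat A) (1\<^sub>m r)) * vecm (transpose_mat W)" .
  show "kron (transpose_mat Bhat) (1\<^sub>m r) * vecm WtV = kron (transpose_mat B) (1\<^sub>m r) * vecm (transpose_mat W)"
    using kron_mult_vecm[of "transpose_mat Bhat" m r "1\<^sub>m r" r r WtV]
      kron_mult_vecm[of "transpose_mat B" m n "1\<^sub>m r" r r "transpose_mat W"]
    by (simp add: WtV_mult_Bhat)
qed (use assms in \<open>simp_all add: mult.commute\<close>)

lemma K2_mult_vecm_transpose_V:
  "(kron (E A * B) (E D * Bt) - kron B Bt) * vecm (1\<^sub>m m) = K2 * vecm (transpose_mat V)"
proof -
  have "(kron (E A * B) (E D * Bt) - kron B Bt) * vecm (1\<^sub>m m)
      = vecm (E D * Bt * transpose_mat (E A * B) - Bt * transpose_mat B)"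
    by (rule kron_diff_mult_vecm_one[where a = n and c = r]) simp_all
  also have "\<dots> = vecm (D * transpose_mat V + transpose_mat V * transpose_mat A)"
    by (simp only: sylvester_V_transposed)
  also have "\<dots> = K2 * vecm (transpose_mat V)"
    using kron_sum_mult_vecm[of D r A n "transpose_mat V"] by simp
  finally show ?thesis .
qed

lemma K2hat_mult_vecm_one:
  "(kron (E Ahat * Bhat) (E D * Bt) - kron Bhat Bt) * vecm (1\<^sub>m m)
   = K2hat * vecm (1\<^sub>m r) + kron Berr (E D * Bt) * vecm (1\<^sub>m m)"
proof -
  have "transpose_mat (E Ahat * Bhat * transpose_mat (E D * Bt) - Bhat * transpose_mat Bt)
      = transpose_mat ((D + Ahat) + Berr * transpose_mat (E D * Bt))"
    by (simp only: reduced_sylvester_V)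
  then have T: "E D * Bt * transpose_mat (E Ahat * Bhat) - Bt * transpose_mat Bhat
      = D + transpose_mat Ahat + E D * Bt * transpose_mat Berr"
    by (simp add: transpose_minus_dim transpose_add_dim transpose_mult_dim D_symmetric transpose_E_D)
  have "(kron (E Ahat * Bhat) (E D * Bt) - kron Bhat Bt) * vecm (1\<^sub>m m)
      = vecm (E D * Bt * transpose_mat (E Ahat * Bhat) - Bt * transpose_mat Bhat)"
    by (rule kron_diff_mult_vecm_one[where a = r and c = r]) simp_all
  also have "\<dots> = K2hat * vecm (1\<^sub>m r) + kron Berr (E D * Bt) * vecm (1\<^sub>m m)"
    unfolding T using kron_sum_mult_vecm[of D r Ahat r "1\<^sub>m r"]
    by (simp add: kron_mult_vecm_one vecm_add)
  finally show ?thesis .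
qed

lemma lambda_reduced_factor_split:
  assumes "invertible_mat K2hat" and "invertible_mat K2"
  shows "(minv K2hat * (kron (E Ahat * Bhat) (E D * Bt) - kron Bhat Bt)
          - kron (c \<cdot>\<^sub>m (E Ahat * Bhat)) (E D * Bt)) * vecm (1\<^sub>m m)
    = (minv K2hat * kron Berr (E D * Bt) - kron (c \<cdot>\<^sub>m Berr) (E D * Bt)) * vecm (1\<^sub>m m)
      + kron P (1\<^sub>m r) * ((minv K2 * (kron (E A * B) (E D * Bt) - kron B Bt)
          - kron (c \<cdot>\<^sub>m (E A * B)) (E D * Bt)) * vecm (1\<^sub>m m))"
proof -
  define vI where "vI = vecm (1\<^sub>m m :: complex mat)"
  define z0 where "z0 = kron Berr (E D * Bt) * vI"
  define s0 where "s0 = kron (c \<cdot>\<^sub>m Berr) (E D * Bt) * vI"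
  define w0 where "w0 = kron (c \<cdot>\<^sub>m (E A * B)) (E D * Bt) * vI"
  have mK2hat: "minv K2hat \<in> carrier_mat (r * r) (r * r)" and mK2: "minv K2 \<in> carrier_mat (n * r) (n * r)"
    using minv_inverse(1)[of K2hat "r * r"] minv_inverse(1)[of K2 "n * r"] assms by simp_all
  have dims: "vI \<in> carrier_mat (m * m) 1" "z0 \<in> carrier_mat (r * r) 1" "s0 \<in> carrier_mat (r * r) 1"
      "w0 \<in> carrier_mat (n * r) 1"
    by (simp_all add: vI_def z0_def s0_def w0_def)
  have "c \<cdot>\<^sub>m (E Ahat * Bhat) = c \<cdot>\<^sub>m Berr + P * (c \<cdot>\<^sub>m (E A * B))"
    unfolding E_Ahat_mult_Bhat
    by (simp add: add_smult_distrib_left_mat[of _ r m] mult_smult_distrib[of P r n])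
  moreover have "kron (P * (c \<cdot>\<^sub>m (E A * B))) (E D * Bt)
      = kron P (1\<^sub>m r) * kron (c \<cdot>\<^sub>m (E A * B)) (E D * Bt)"
    using mult_kron_kron[of P r n "1\<^sub>m r" r r "c \<cdot>\<^sub>m (E A * B)" m "E D * Bt" m] by simp
  ultimately have "kron (c \<cdot>\<^sub>m (E Ahat * Bhat)) (E D * Bt) * vI = s0 + kron P (1\<^sub>m r) * w0"
    unfolding s0_def w0_def vI_def by (simp add: kron_add_left add_mult_distrib_dim)
  then have H: "(minv K2hat * (kron (E Ahat * Bhat) (E D * Bt) - kron Bhat Bt)
          - kron (c \<cdot>\<^sub>m (E Ahat * Bhat)) (E D * Bt)) * vI
      = (vecm (1\<^sub>m r) + minv K2hat * z0) - (s0 + kron P (1\<^sub>m r) * w0)"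
    using mK2hat assms unfolding z0_def vI_def
    by (simp add: minus_mult_distrib_dim K2hat_mult_vecm_one mult_add_distrib_dim
        minv_mult_cancel[of K2hat "r * r" _ 1])
  have Ev: "(minv K2hat * kron Berr (E D * Bt) - kron (c \<cdot>\<^sub>m Berr) (E D * Bt)) * vI
      = minv K2hat * z0 - s0"
    using mK2hat unfolding z0_def s0_def vI_def by (simp add: minus_mult_distrib_dim)
  have VP: "transpose_mat V * transpose_mat P = 1\<^sub>m r"
    using transpose_mult_dim[of P V] P_mult_V by simp
  define U where "U = kron (E A * B) (E D * Bt) - kron B Bt"
  have U: "U \<in> carrier_mat (n * r) (m * m)" and Uv: "U * vI = K2 * vecm (transpose_mat V)"
    unfolding U_def vI_def by (simp_all add: K2_mult_vecm_transpose_V)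
  have "(minv K2 * U - kron (c \<cdot>\<^sub>m (E A * B)) (E D * Bt)) * vI = minv K2 * (U * vI) - w0"
    using mK2 U dims unfolding w0_def by (simp add: minus_mult_distrib_dim)
  also have "\<dots> = vecm (transpose_mat V) - w0"
    using mK2 assms by (simp add: Uv minv_mult_cancel[of K2 "n * r" _ 1] mult.commute)
  finally have "kron P (1\<^sub>m r) * ((minv K2 * U - kron (c \<cdot>\<^sub>m (E A * B)) (E D * Bt)) * vI)
      = kron P (1\<^sub>m r) * vecm (transpose_mat V) - kron P (1\<^sub>m r) * w0"
    using dims by (simp add: mult_minus_distrib_dim mult.commute)
  also have "kron P (1\<^sub>m r) * vecm (transpose_mat V) = vecm (1\<^sub>m r)"
    using kron_mult_vecm[of P r n "1\<^sub>m r" r r "transpose_mat V"] by (simp add: VP)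
  finally have R: "kron P (1\<^sub>m r) * ((minv K2 * (kron (E A * B) (E D * Bt) - kron B Bt)
          - kron (c \<cdot>\<^sub>m (E A * B)) (E D * Bt)) * vI) = vecm (1\<^sub>m r) - kron P (1\<^sub>m r) * w0"
    unfolding U_def .
  show ?thesis
    unfolding vI_def[symmetric] H Ev R by (rule eq_matI) (use dims mK2hat in \<open>simp_all add: algebra_simps\<close>)
qed

lemma lambda_exp_weight_invariance:
  assumes "invertible_mat K2hat" and "invertible_mat K2"
  shows "transpose_mat (vecm (1\<^sub>m p)) * kron (C * E A) (Ct * E D)
        * (kron V (1\<^sub>m r) * minv K2hat * kron P (1\<^sub>m r) - minv K2)
    = transpose_mat (vecm (1\<^sub>m p)) * kron C Ct
        * (kron V (1\<^sub>m r) * minv K2hat * kron P (1\<^sub>m r) - minv K2)"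
proof -
  define l where "l = transpose_mat (vecm (1\<^sub>m p :: complex mat))"
  define g where "g = transpose_mat (vecm (transpose_mat W))"
  define Md where "Md = kron V (1\<^sub>m r) * minv K2hat * kron P (1\<^sub>m r) - minv K2"
  have mK2hat: "minv K2hat \<in> carrier_mat (r * r) (r * r)" and mK2: "minv K2 \<in> carrier_mat (n * r) (n * r)"
    using minv_inverse(1)[of K2hat "r * r"] minv_inverse(1)[of K2 "n * r"] assms by simp_all
  have dims: "l \<in> carrier_mat 1 (p * p)" "g \<in> carrier_mat 1 (n * r)" "Md \<in> carrier_mat (n * r) (n * r)"
    using mK2hat mK2 by (simp_all add: l_def g_def Md_def mult.commute)
  have gK2: "g * K2 = transpose_mat (vecm (D * transpose_mat W + transpose_mat W * A))"
    unfolding g_def using transpose_vecm_mult_kron_sum[of D r A n "transpose_mat W"] by (simp add: D_symmetric)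
  have W: "E D * transpose_mat Ct * C * E A = transpose_mat Ct * C + (D * transpose_mat W + transpose_mat W * A)"
    unfolding sylvester_W_sum by (rule eq_matI) simp_all
  have "l * kron (C * E A) (Ct * E D) = transpose_mat (vecm (E D * transpose_mat Ct * C * E A))"
    unfolding l_def using transpose_vecm_mult_kron[of "C * E A" p n "Ct * E D" p r "1\<^sub>m p"]
    by (simp add: transpose_mult_dim transpose_E_D)
  also have "\<dots> = l * kron C Ct + g * K2"
    unfolding W gK2 l_def using transpose_vecm_mult_kron[of C p n Ct p r "1\<^sub>m p"]
    by (simp add: vecm_add transpose_add_dim)
  finally have lG2: "l * kron (C * E A) (Ct * E D) = l * kron C Ct + g * K2" .
  have "g * K2 * kron V (1\<^sub>m r) = transpose_mat (vecm (D * WtV + WtV * Ahat))"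
    unfolding gK2 sylvester_W_mult_V[symmetric]
    using transpose_vecm_mult_kron[of V n r "1\<^sub>m r" r r "D * transpose_mat W + transpose_mat W * A"] by simp
  also have "\<dots> = transpose_mat (vecm WtV) * K2hat"
    using transpose_vecm_mult_kron_sum[of D r Ahat r WtV] by (simp add: D_symmetric)
  finally have gK2V: "g * K2 * kron V (1\<^sub>m r) = transpose_mat (vecm WtV) * K2hat" .
  have WtVP: "transpose_mat (vecm WtV) * kron P (1\<^sub>m r) = g"
    unfolding g_def using transpose_vecm_mult_kron[of P r n "1\<^sub>m r" r r WtV] by (simp add: WtV_mult_P)
  have K2hat_minv: "K2hat * (minv K2hat * kron P (1\<^sub>m r)) = kron P (1\<^sub>m r)"
    using minv_inverse(2)[of K2hat "r * r"] assms mK2hat by (simp flip: assoc_mult_mat_dim)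
  have K2_minv: "K2 * minv K2 = 1\<^sub>m (n * r)"
    using minv_inverse(2)[of K2 "n * r"] assms by simp
  have "g * K2 * Md = g * K2 * kron V (1\<^sub>m r) * minv K2hat * kron P (1\<^sub>m r) - g * K2 * minv K2"
    unfolding Md_def using dims mK2hat mK2 by (simp add: mult_minus_distrib_dim)
  also have "\<dots> = transpose_mat (vecm WtV) * K2hat * minv K2hat * kron P (1\<^sub>m r) - g * K2 * minv K2"
    by (simp only: gK2V)
  also have "\<dots> = 0\<^sub>m 1 (n * r)"
    using dims mK2hat mK2 WtVP by (intro eq_matI) (simp_all add: K2hat_minv K2_minv)
  finally have gK2M: "g * K2 * Md = 0\<^sub>m 1 (n * r)" .
  have "l * kron (C * E A) (Ct * E D) * Md = l * kron C Ct * Md + g * K2 * Md"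
    unfolding lG2 using dims by (simp add: add_mult_distrib_dim)
  also have "\<dots> = l * kron C Ct * Md"
    unfolding gK2M using dims by (intro eq_matI) simp_all
  finally show ?thesis
    by (simp only: l_def Md_def)
qed

lemma error_lambda:
  assumes Ei: "Ei \<in> carrier_mat r r" and K2hat: "invertible_mat K2hat" and K2: "invertible_mat K2"
  shows "transpose_mat (vecm (1\<^sub>m p)) * kron Chat Ct * minv K2hat * kron (1\<^sub>m r) Ei
        * (minv K2hat * (kron (E Ahat * Bhat) (E D * Bt) - kron Bhat Bt)
           - kron (c \<cdot>\<^sub>m (E Ahat * Bhat)) (E D * Bt)) * vecm (1\<^sub>m m)
    - transpose_mat (vecm (1\<^sub>m p)) * kron C Ct * minv K2 * kron (1\<^sub>m n) Ei
        * (minv K2 * (kron (E A * B) (E D * Bt) - kron B Bt)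
           - kron (c \<cdot>\<^sub>m (E A * B)) (E D * Bt)) * vecm (1\<^sub>m m)
    = transpose_mat (vecm (1\<^sub>m p)) * kron Chat Ct * minv K2hat * kron (1\<^sub>m r) Ei
        * (minv K2hat * kron Berr (E D * Bt) - kron (c \<cdot>\<^sub>m Berr) (E D * Bt)) * vecm (1\<^sub>m m)
    + transpose_mat (vecm (1\<^sub>m p)) * kron (C * E A) (Ct * E D)
        * (kron V (1\<^sub>m r) * minv K2hat * kron P (1\<^sub>m r) - minv K2) * kron (1\<^sub>m n) Ei
        * (minv K2 * (kron (E A * B) (E D * Bt) - kron B Bt)
           - kron (c \<cdot>\<^sub>m (E A * B)) (E D * Bt)) * vecm (1\<^sub>m m)"
proof (rule weighted_mult_minv_diff_eq[where s = "p * p" and R = "r * r" and N = "n * r" and k = "m * m"])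
  show "kron Chat Ct = kron C Ct * kron V (1\<^sub>m r)"
    using mult_kron_kron[of C p n Ct p r V r "1\<^sub>m r" r] by (simp add: Chat_def)
  show "kron (1\<^sub>m r) Ei * kron P (1\<^sub>m r) = kron P (1\<^sub>m r) * kron (1\<^sub>m n) Ei"
    using mult_kron_kron[of "1\<^sub>m r" r r Ei r r P n "1\<^sub>m r" r] mult_kron_kron[of P r n "1\<^sub>m r" r r "1\<^sub>m n" n Ei r] Ei
    by simp
qed (use assms lambda_reduced_factor_split[OF K2hat K2] lambda_exp_weight_invariance[OF K2hat K2] minv_inverse(1)[of K2hat "r * r"]
      minv_inverse(1)[of K2 "n * r"] in \<open>simp_all add: mult.commute\<close>)

end


theorem theorem3p3:
  fixes A0 B0 C0 :: "real mat" and n m p r :: nat and T :: real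
    and lam :: "nat \<Rightarrow> complex" and S V W Ah Bh Ch :: "complex mat"
  defines "A \<equiv> cmat A0" and "B \<equiv> cmat B0" and "C \<equiv> cmat C0"
    and "D \<equiv> diagm r lam"
  defines "Bt \<equiv> S * Bh" and "Ct \<equiv> Ch * minv S"
    and "WV \<equiv> transpose_mat W * V"
  defines "Pr \<equiv> V * minv WV * transpose_mat W"
    and "eT \<equiv> \<lambda>X. mexp (complex_of_real T \<cdot>\<^sub>m X)"
    and "Ir \<equiv> (1\<^sub>m r :: complex mat)" and "In \<equiv> (1\<^sub>m n :: complex mat)"
  defines "K2h \<equiv> kron Ir D + kron Ah Ir" and "K2 \<equiv> kron In D + kron A Ir"
  assumes A0: "A0 \<in> carrier_mat n n" and B0: "B0 \<in> carrier_mat n m"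
    and C0: "C0 \<in> carrier_mat p n" and T: "T > 0"
    and S: "S \<in> carrier_mat r r" and Sinv: "invertible_mat S"
    and V: "V \<in> carrier_mat n r" and W: "W \<in> carrier_mat n r"
    and Ah: "Ah \<in> carrier_mat r r" and Bh: "Bh \<in> carrier_mat r m" and Ch: "Ch \<in> carrier_mat p r"
    and Ah_diag: "Ah = minv S * D * S"
    and sylV: "- (V * D) - A * V = B * transpose_mat Bt - eT A * B * transpose_mat Bt * eT D"
    and sylW: "- (W * D) - transpose_mat A * W
               = transpose_mat C * Ct - eT (transpose_mat A) * transpose_mat C * Ct * eT D"
    and WVinv: "invertible_mat WV"
    and Ah_eq: "Ah = minv WV * transpose_mat W * A * V"
    and Bh_eq: "Bh = minv WV * transpose_mat W * B"
    and Ch_eq: "Ch = C * V"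
    and inv1: "invertible_mat (kron Ir Ah + kron D Ir)"
    and inv2: "invertible_mat (kron Ir A + kron D In)"
    and inv3: "invertible_mat (kron Ir D + kron (transpose_mat Ah) Ir)"
    and inv4: "invertible_mat (kron In D + kron (transpose_mat A) Ir)"
    and inv5: "invertible_mat K2h" and inv6: "invertible_mat K2"
  shows
   "(kron Ir Ch * minv (kron Ir Ah + kron D Ir)
        * (kron (eT D * Bt) (eT Ah * Bh) - kron Bt Bh) * vecm (1\<^sub>m m)
    - kron Ir C * minv (kron Ir A + kron D In)
        * (kron (eT D * Bt) (eT A * B) - kron Bt B) * vecm (1\<^sub>m m)
    = kron Ir Ch * minv (kron Ir Ah + kron D Ir)
        * kron (eT D * Bt) (minv WV * transpose_mat W * (eT (A * Pr) - eT A) * B) * vecm (1\<^sub>m m))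
  \<and> (kron (transpose_mat Bh) Ir * minv (kron Ir D + kron (transpose_mat Ah) Ir)
        * (kron (eT (transpose_mat Ah) * transpose_mat Ch) (eT D * transpose_mat Ct)
           - kron (transpose_mat Ch) (transpose_mat Ct)) * vecm (1\<^sub>m p)
    - kron (transpose_mat B) Ir * minv (kron In D + kron (transpose_mat A) Ir)
        * (kron (eT (transpose_mat A) * transpose_mat C) (eT D * transpose_mat Ct)
           - kron (transpose_mat C) (transpose_mat Ct)) * vecm (1\<^sub>m p)
    = kron (transpose_mat Bh) Ir * minv (kron Ir D + kron (transpose_mat Ah) Ir)
        * kron (transpose_mat V * (eT (transpose_mat A * transpose_mat Pr) - eT (transpose_mat A))
                  * transpose_mat C) (eT D * transpose_mat Ct) * vecm (1\<^sub>m p))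
  \<and> (\<forall>i<r.
     transpose_mat (vecm (1\<^sub>m p)) * kron Ch Ct * minv K2h
        * kron Ir (unitcol r i * transpose_mat (unitcol r i))
        * (minv K2h * (kron (eT Ah * Bh) (eT D * Bt) - kron Bh Bt)
           - kron (complex_of_real T \<cdot>\<^sub>m (eT Ah * Bh)) (eT D * Bt)) * vecm (1\<^sub>m m)
   - transpose_mat (vecm (1\<^sub>m p)) * kron C Ct * minv K2
        * kron In (unitcol r i * transpose_mat (unitcol r i))
        * (minv K2 * (kron (eT A * B) (eT D * Bt) - kron B Bt)
           - kron (complex_of_real T \<cdot>\<^sub>m (eT A * B)) (eT D * Bt)) * vecm (1\<^sub>m m)
   = transpose_mat (vecm (1\<^sub>m p)) * kron Ch Ct * minv K2h
        * kron Ir (unitcol r i * transpose_mat (unitcol r i))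
        * (minv K2h * kron (minv WV * transpose_mat W * (eT (A * Pr) - eT A) * B) (eT D * Bt)
           - kron (complex_of_real T \<cdot>\<^sub>m (minv WV * transpose_mat W * (eT (A * Pr) - eT A) * B))
                  (eT D * Bt)) * vecm (1\<^sub>m m)
   + transpose_mat (vecm (1\<^sub>m p)) * kron (C * eT A) (Ct * eT D)
        * (kron V Ir * minv K2h * kron (minv WV * transpose_mat W) Ir - minv K2)
        * kron In (unitcol r i * transpose_mat (unitcol r i))
        * (minv K2 * (kron (eT A * B) (eT D * Bt) - kron B Bt)
           - kron (complex_of_real T \<cdot>\<^sub>m (eT A * B)) (eT D * Bt)) * vecm (1\<^sub>m m))"
proof -
  have minv_S: "minv S \<in> carrier_mat r r"
    using minv_inverse(1)[OF S Sinv] .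
  interpret tl_irka_projection A B C V W D Bt Ct "complex_of_real T" n m p r
    using A0 B0 C0 V W S Bh Ch minv_S WVinv sylV sylW
    by unfold_locales (auto simp: A_def B_def C_def D_def diagm_def Bt_def Ct_def WV_def eT_def)
  have WV_eq: "WV = WtV"
    by (simp add: WV_def WtV_def)
  have P_eq: "minv WV * transpose_mat W = P"
    by (simp add: WV_eq P_def)
  have Pr_eq: "Pr = Proj"
    by (simp add: Pr_def Proj_def P_def WV_eq)
  have Ah_eq': "Ah = Ahat" and Bh_eq': "Bh = Bhat" and Ch_eq': "Ch = Chat"
    using Ah_eq Bh_eq Ch_eq by (simp_all add: Ahat_def Bhat_def Chat_def P_eq)
  have Ei: "unitcol r i * transpose_mat (unitcol r i) \<in> carrier_mat r r" for i
    by (simp add: unitcol_def)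
  note defs = K2h_def K2_def Ir_def In_def Ah_eq' Bh_eq' Ch_eq'
  show ?thesis
    unfolding defs eT_def P_eq Pr_eq
    using error_c[OF inv1[unfolded defs] inv2[unfolded defs], unfolded Berr_def]
      error_b[OF inv3[unfolded defs] inv4[unfolded defs], unfolded Cerr_def]
      error_lambda[OF Ei inv5[unfolded defs] inv6[unfolded defs], unfolded Berr_def]
    by blast
qed

end
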